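(* Let $G$ be a finite nonabelian simple group, $G\le S_n$ a faithful permutation representation of minimum degree, $k\ge1$, and $\Omega=\overline G^k\subseteq\{0,1\}^{kn^2}$. Let $Q=\{(g_1,\dots,g_{2k})\in G^{2k}:g_1=g_{2k}=1\}$, acting on the variables by $M_{i,a,b}\mapsto M_{i,g_{2i-1}(a),g_{2i}(b)}$ (so $M_i\mapsto\overline{g_{2i-1}}M_i\overline{g_{2i}}^{-1}$). Let $H\le K\le Q$, and let $S$ be the edge set of a connected component of the graph $([k],E(H)\cap E(K))$. Let $r\in\mathbb N$, and for each $i\in[r]$ let $H_i\le L_i\le Q$ with $L_i\in\mathcal N_{Q,\Omega}$. Suppose $H_1\cap\dots\cap H_r=H$ and $L_1\cap\dots\cap L_r\le K$. Then there exists $i\in[r]$ with $S\subseteq E(H_i)\cap E(L_i)$.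
   Context: $\overline G$ is the set of permutation matrices of elements of $G$. For $f$ on $\Omega$, $\mathrm{Stab}_Q(f)=\{\pi\in Q:f(\pi x)=f(x)\ \forall x\in\Omega\}$, and $\mathcal N_{Q,\Omega}$ is the set of $\mathrm{Stab}_Q(f)$ for $f:\Omega\to\mathbb N$. For $H\le G^{2k}$ and $S'\subseteq[2k]$, $H{\upharpoonright}_{S'}=\{(h_j)_{j\in S'}: h\in H,\ h_j=1\ \forall j\notin S'\}$. $\mathrm{Diag}(G^{\{2i,2i+1\}})=\{(g,g):g\in G\}$. $E(H)=\{\{i,i+1\}: i\in[k-1],\ H{\upharpoonright}_{\{2i,2i+1\}}=\mathrm{Diag}(G^{\{2i,2i+1\}})\}$ is viewed as an edge set on vertex set $[k]$. *)

theory Defs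
  imports "HOL-Algebra.Sym_Groups" "HOL-Algebra.SimpleGroups"
begin

definition perm_sub :: "nat \<Rightarrow> (nat \<Rightarrow> nat) set \<Rightarrow> (nat \<Rightarrow> nat) monoid" where
  "perm_sub n Gs = (sym_group n)\<lparr>carrier := Gs\<rparr>"

definition min_degree_rep :: "nat \<Rightarrow> (nat \<Rightarrow> nat) set \<Rightarrow> bool" where
  "min_degree_rep n Gs \<longleftrightarrow>
     (\<forall>m (\<phi> :: (nat \<Rightarrow> nat) \<Rightarrow> (nat \<Rightarrow> nat)).
        \<phi> \<in> hom (perm_sub n Gs) (sym_group m) \<and> inj_on \<phi> Gs \<longrightarrow> n \<le> m)"

definition perm_mat :: "(nat \<Rightarrow> nat) \<Rightarrow> nat \<Rightarrow> nat \<Rightarrow> nat" where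
  "perm_mat g a b = (if a = g b then 1 else 0)"

text \<open>Omega: k-tuples of permutation matrices of elements of G, as 0/1-vectors indexed by
  [k] x [n] x [n] (entries outside this index set are 0).\<close>
definition Omega :: "nat \<Rightarrow> (nat \<Rightarrow> nat) set \<Rightarrow> nat \<Rightarrow> (nat \<Rightarrow> nat \<Rightarrow> nat \<Rightarrow> nat) set" where
  "Omega n Gs k = {x. \<exists>h. (\<forall>i\<in>{1..k}. h i \<in> Gs) \<and>
      x = (\<lambda>i a b. if i \<in> {1..k} \<and> a \<in> {1..n} \<and> b \<in> {1..n} then perm_mat (h i) a b else 0)}"

definition prod_grp :: "(nat \<Rightarrow> nat) set \<Rightarrow> nat \<Rightarrow> (nat \<Rightarrow> nat \<Rightarrow> nat) monoid" where
  "prod_grp Gs k = \<lparr> carrier = {h. (\<forall>j\<in>{1..2*k}. h j \<in> Gs) \<and> (\<forall>j. j \<notin> {1..2*k} \<longrightarrow> h j = id)},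
                    mult = (\<lambda>h h' j. h j \<circ> h' j), one = (\<lambda>j. id) \<rparr>"

definition Qgrp :: "(nat \<Rightarrow> nat) set \<Rightarrow> nat \<Rightarrow> (nat \<Rightarrow> nat \<Rightarrow> nat) set" where
  "Qgrp Gs k = {h \<in> carrier (prod_grp Gs k). h 1 = id \<and> h (2*k) = id}"

definition act :: "nat \<Rightarrow> nat \<Rightarrow> (nat \<Rightarrow> nat \<Rightarrow> nat) \<Rightarrow> (nat \<Rightarrow> nat \<Rightarrow> nat \<Rightarrow> nat) \<Rightarrow> (nat \<Rightarrow> nat \<Rightarrow> nat \<Rightarrow> nat)" where
  "act n k \<pi> x = (\<lambda>i a b. if i \<in> {1..k} \<and> a \<in> {1..n} \<and> b \<in> {1..n}
                           then x i (\<pi> (2*i - 1) a) (\<pi> (2*i) b) else 0)"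

definition Stab :: "nat \<Rightarrow> nat \<Rightarrow> (nat \<Rightarrow> nat \<Rightarrow> nat) set \<Rightarrow> (nat \<Rightarrow> nat \<Rightarrow> nat \<Rightarrow> nat) set
                     \<Rightarrow> ((nat \<Rightarrow> nat \<Rightarrow> nat \<Rightarrow> nat) \<Rightarrow> nat) \<Rightarrow> (nat \<Rightarrow> nat \<Rightarrow> nat) set" where
  "Stab n k Q \<Omega> f = {\<pi> \<in> Q. \<forall>x\<in>\<Omega>. f (act n k \<pi> x) = f x}"

definition NQ :: "nat \<Rightarrow> nat \<Rightarrow> (nat \<Rightarrow> nat \<Rightarrow> nat) set \<Rightarrow> (nat \<Rightarrow> nat \<Rightarrow> nat \<Rightarrow> nat) set
                     \<Rightarrow> (nat \<Rightarrow> nat \<Rightarrow> nat) set set" where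
  "NQ n k Q \<Omega> = {Stab n k Q \<Omega> f | f. True}"

text \<open>H restricted to {2i,2i+1} equals the diagonal.\<close>
definition restr_diag :: "(nat \<Rightarrow> nat) set \<Rightarrow> nat \<Rightarrow> (nat \<Rightarrow> nat \<Rightarrow> nat) set \<Rightarrow> nat \<Rightarrow> bool" where
  "restr_diag Gs k H i \<longleftrightarrow>
     {(h (2*i), h (2*i+1)) | h. h \<in> H \<and> (\<forall>j\<in>{1..2*k} - {2*i, 2*i+1}. h j = id)}
       = {(g, g) | g. g \<in> Gs}"

definition Eset :: "(nat \<Rightarrow> nat) set \<Rightarrow> nat \<Rightarrow> (nat \<Rightarrow> nat \<Rightarrow> nat) set \<Rightarrow> nat set set" where
  "Eset Gs k H = {{i, i+1} | i. 1 \<le> i \<and> i \<le> k - 1 \<and> restr_diag Gs k H i}"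

definition component_edges :: "nat \<Rightarrow> nat set set \<Rightarrow> nat set set \<Rightarrow> bool" where
  "component_edges k E S \<longleftrightarrow>
     (\<exists>u\<in>{1..k}. S = {e \<in> E. e \<subseteq> {v \<in> {1..k}. (u, v) \<in> {(a, b). {a, b} \<in> E}\<^sup>*}})"

end

theory Submission
  imports Defs
begin

(* For a subgroup L of G^2k and an edge {i, i+1}, let L_i be the subgroup of G x G formed by the
   elements of L supported on the coordinates {2i, 2i+1}.  If L_i contains the diagonal, then
   {g. (g, 1) in L_i} is normal in G, so by simplicity L_i is either the diagonal or all of G x G.

   Take an edge of S.  Every (L_l)_i contains H_i, which is the diagonal.  If every (L_l)_i were
   all of G x G, then (g, 1) with g <> 1 would lie in the intersection of the L_l and hence in K,
   although K_i is the diagonal.  So some L_l is diagonal on this edge.  As the stabiliser of a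
   function on Omega, this L_l stays diagonal on each adjacent edge lying in E(H) and E(K): on a
   single point of Omega, a factor g on the left of M_(i+1) can be traded for the conjugate
   c^-1 g c on its right, where c is the permutation at position i+1.  Hence if (L_l)_(i+1) were
   all of G x G, L_l would contain (g, 1) in the coordinates {2i, 2i+1}; the left neighbour is
   symmetric.  Moving along the component, L_l is diagonal on all of S, and H <= H_l <= L_l then
   makes H_l diagonal there too. *)

definition edge_elem :: "nat \<Rightarrow> (nat \<Rightarrow> nat) \<Rightarrow> (nat \<Rightarrow> nat) \<Rightarrow> nat \<Rightarrow> nat \<Rightarrow> nat" where
  "edge_elem i a b = (\<lambda>j. if j = 2*i then a else if j = 2*i+1 then b else id)"

(* For L contained in G^2k this is the paper's L restricted to {2i, 2i+1}. *)
definition edge_part ::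
    "(nat \<Rightarrow> nat) set \<Rightarrow> (nat \<Rightarrow> nat \<Rightarrow> nat) set \<Rightarrow> nat \<Rightarrow> ((nat \<Rightarrow> nat) \<times> (nat \<Rightarrow> nat)) set" where
  "edge_part Gs L i = {(a, b) \<in> Gs \<times> Gs. edge_elem i a b \<in> L}"

definition perm_point :: "nat \<Rightarrow> nat \<Rightarrow> (nat \<Rightarrow> nat \<Rightarrow> nat) \<Rightarrow> nat \<Rightarrow> nat \<Rightarrow> nat \<Rightarrow> nat" where
  "perm_point n k h =
     (\<lambda>i a b. if i \<in> {1..k} \<and> a \<in> {1..n} \<and> b \<in> {1..n} then perm_mat (h i) a b else 0)"

definition tuple_act :: "(nat \<Rightarrow> nat \<Rightarrow> nat) \<Rightarrow> (nat \<Rightarrow> nat \<Rightarrow> nat) \<Rightarrow> nat \<Rightarrow> nat \<Rightarrow> nat" where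
  "tuple_act \<pi> h = (\<lambda>i. inv' (\<pi> (2*i - 1)) \<circ> h i \<circ> \<pi> (2*i))"

lemma Omega_iff: "x \<in> Omega n Gs k \<longleftrightarrow> (\<exists>h. (\<forall>i\<in>{1..k}. h i \<in> Gs) \<and> x = perm_point n k h)"
  unfolding Omega_def perm_point_def by simp

lemma perm_point_cong: "(\<And>i. i \<in> {1..k} \<Longrightarrow> h i = h' i) \<Longrightarrow> perm_point n k h = perm_point n k h'"
  unfolding perm_point_def by (intro ext) auto

lemma carrier_prod_grp: "h \<in> carrier (prod_grp Gs k) \<longleftrightarrow>
    (\<forall>j\<in>{1..2*k}. h j \<in> Gs) \<and> (\<forall>j. j \<notin> {1..2*k} \<longrightarrow> h j = id)"
  unfolding prod_grp_def by simp

lemma mult_prod_grp: "h \<otimes>\<^bsub>prod_grp Gs k\<^esub> h' = (\<lambda>j. h j \<circ> h' j)"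
  unfolding prod_grp_def by simp

lemma one_prod_grp: "\<one>\<^bsub>prod_grp Gs k\<^esub> = (\<lambda>j. id)"
  unfolding prod_grp_def by simp

lemma edge_elem_mult: "edge_elem i a b \<otimes>\<^bsub>prod_grp Gs k\<^esub> edge_elem i c d = edge_elem i (a \<circ> c) (b \<circ> d)"
  unfolding edge_elem_def mult_prod_grp by auto

lemma edge_elem_id: "edge_elem i id id = \<one>\<^bsub>prod_grp Gs k\<^esub>"
  unfolding edge_elem_def one_prod_grp by auto

lemma edge_elem_odd [simp]: "1 \<le> j \<Longrightarrow> edge_elem i a b (2*j - 1) = (if j = i + 1 then b else id)"
  unfolding edge_elem_def by auto

lemma edge_elem_even [simp]: "edge_elem i a b (2*j) = (if j = i then a else id)"
  unfolding edge_elem_def by auto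

lemma tuple_act_edge_elem:
  assumes "1 \<le> j"
  shows "tuple_act (edge_elem i a b) h j = (if j = i + 1 then inv' b else id) \<circ> h j \<circ> (if j = i then a else id)"
  unfolding tuple_act_def edge_elem_odd[OF assms] edge_elem_even by (simp add: inv_id)

lemma edge_part_mono: "L \<subseteq> L' \<Longrightarrow> edge_part Gs L i \<subseteq> edge_part Gs L' i"
  unfolding edge_part_def by auto

lemma Id_on_edge_part_elem: "Id_on Gs \<subseteq> edge_part Gs L i \<Longrightarrow> g \<in> Gs \<Longrightarrow> edge_elem i g g \<in> L"
  unfolding edge_part_def by auto

lemma restr_diag_iff_edge_part:
  assumes L: "L \<subseteq> carrier (prod_grp Gs k)" and i: "1 \<le> i" "i + 1 \<le> k"
  shows "restr_diag Gs k L i \<longleftrightarrow> edge_part Gs L i = Id_on Gs"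
proof -
  have supported: "h = edge_elem i (h (2*i)) (h (2*i+1))"
    if "h \<in> L" "\<forall>j\<in>{1..2*k} - {2*i, 2*i+1}. h j = id" for h
  proof
    fix j
    show "h j = edge_elem i (h (2*i)) (h (2*i+1)) j"
    proof (cases "j \<in> {1..2*k}")
      case False
      have "h \<in> carrier (prod_grp Gs k)" using that L by blast
      with False have "h j = id" unfolding carrier_prod_grp by blast
      with False show ?thesis using i unfolding edge_elem_def by auto
    qed (use that in \<open>auto simp: edge_elem_def\<close>)
  qed
  have "{(h (2*i), h (2*i+1)) | h. h \<in> L \<and> (\<forall>j\<in>{1..2*k} - {2*i, 2*i+1}. h j = id)}
      = edge_part Gs L i"
  proof (intro equalityI subsetI)
    fix p assume "p \<in> {(h (2*i), h (2*i+1)) | h. h \<in> L \<and> (\<forall>j\<in>{1..2*k} - {2*i, 2*i+1}. h j = id)}"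
    then obtain h where h: "p = (h (2*i), h (2*i+1))" "h \<in> L"
        "\<forall>j\<in>{1..2*k} - {2*i, 2*i+1}. h j = id"
      by blast
    moreover have "h \<in> carrier (prod_grp Gs k)" using h(2) L by blast
    then have "h (2*i) \<in> Gs" "h (2*i+1) \<in> Gs"
      using i unfolding carrier_prod_grp by auto
    ultimately show "p \<in> edge_part Gs L i"
      using supported unfolding edge_part_def by auto
  next
    fix p assume "p \<in> edge_part Gs L i"
    then obtain a b where "p = (a, b)" "edge_elem i a b \<in> L"
      unfolding edge_part_def by blast
    then show "p \<in> {(h (2*i), h (2*i+1)) | h. h \<in> L \<and> (\<forall>j\<in>{1..2*k} - {2*i, 2*i+1}. h j = id)}"
      by (intro CollectI exI[of _ "edge_elem i a b"]) (auto simp: edge_elem_def)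
  qed
  then show ?thesis
    unfolding restr_diag_def Id_on_def by auto
qed

lemma Eset_edge:
  assumes "e \<in> Eset Gs k L"
  shows "\<exists>i. 1 \<le> i \<and> i + 1 \<le> k \<and> e = {i, i+1}"
proof -
  obtain i where "1 \<le> i" "i \<le> k - 1" "e = {i, i+1}"
    using assms unfolding Eset_def by blast
  then show ?thesis by (intro exI[of _ i]) simp
qed

lemma Eset_iff_restr_diag:
  assumes "1 \<le> i" "i + 1 \<le> k"
  shows "{i, i+1} \<in> Eset Gs k L \<longleftrightarrow> restr_diag Gs k L i"
proof
  assume "{i, i+1} \<in> Eset Gs k L"
  then obtain j where "{i, i+1} = {j, j+1}" "restr_diag Gs k L j"
    unfolding Eset_def by blast
  moreover from this(1) have "i = j"
    by (auto simp: doubleton_eq_iff)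
  ultimately show "restr_diag Gs k L i" by simp
next
  assume "restr_diag Gs k L i"
  with assms have "1 \<le> i \<and> i \<le> k - 1 \<and> restr_diag Gs k L i" by simp
  then show "{i, i+1} \<in> Eset Gs k L"
    unfolding Eset_def by blast
qed

lemma edge_in_Eset_iff:
  assumes "L \<subseteq> carrier (prod_grp Gs k)" "1 \<le> i" "i + 1 \<le> k"
  shows "{i, i+1} \<in> Eset Gs k L \<longleftrightarrow> edge_part Gs L i = Id_on Gs"
  using Eset_iff_restr_diag[OF assms(2,3)] restr_diag_iff_edge_part[OF assms] by simp

lemma Eset_Id_on_subset:
  assumes "H \<subseteq> L" "L \<subseteq> carrier (prod_grp Gs k)" "{i, i+1} \<in> Eset Gs k H" "1 \<le> i" "i + 1 \<le> k"
  shows "Id_on Gs \<subseteq> edge_part Gs L i"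
proof -
  have "edge_part Gs H i = Id_on Gs"
    using edge_in_Eset_iff[of H Gs k i] assms by blast
  then show ?thesis
    using edge_part_mono[OF assms(1)] by blast
qed

lemma Eset_sandwich:
  assumes "H \<subseteq> H'" "H' \<subseteq> L" "L \<subseteq> carrier (prod_grp Gs k)"
    and "e \<in> Eset Gs k H" "e \<in> Eset Gs k L"
  shows "e \<in> Eset Gs k H'"
proof -
  obtain i where i: "1 \<le> i" "i + 1 \<le> k" "e = {i, i+1}"
    using Eset_edge[OF assms(4)] by blast
  have carrier: "H \<subseteq> carrier (prod_grp Gs k)" "H' \<subseteq> carrier (prod_grp Gs k)"
    using assms(1-3) by auto
  have "edge_part Gs H i = Id_on Gs" "edge_part Gs L i = Id_on Gs"
    using assms(4,5) i edge_in_Eset_iff[OF carrier(1) i(1,2)] edge_in_Eset_iff[OF assms(3) i(1,2)]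
    by simp_all
  then have "edge_part Gs H' i = Id_on Gs"
    using edge_part_mono[OF assms(1)] edge_part_mono[OF assms(2)] by blast
  then show ?thesis
    using edge_in_Eset_iff[OF carrier(2) i(1,2)] i(3) by simp
qed

lemma component_edges_propagate:
  assumes S: "component_edges k E S" and nonempty: "{} \<notin> E"
    and e0: "e0 \<in> S" "P e0"
    and step: "\<And>e e'. e \<in> E \<Longrightarrow> e' \<in> E \<Longrightarrow> e \<inter> e' \<noteq> {} \<Longrightarrow> P e \<Longrightarrow> P e'"
  shows "\<forall>e\<in>S. P e"
proof -
  define R where "R = {(a, b). {a, b} \<in> E}"
  obtain u where S_eq: "S = {e \<in> E. e \<subseteq> {v \<in> {1..k}. (u, v) \<in> R\<^sup>*}}"
    using S unfolding component_edges_def R_def by blast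
  have R_sym: "R\<inverse> = R"
    unfolding R_def by (auto simp: insert_commute)
  have S_reachable: "e \<in> E \<and> (\<exists>v\<in>e. (u, v) \<in> R\<^sup>*)" if "e \<in> S" for e
  proof -
    have "e \<in> E" "e \<subseteq> {v \<in> {1..k}. (u, v) \<in> R\<^sup>*}"
      using that S_eq by auto
    moreover from \<open>e \<in> E\<close> nonempty have "e \<noteq> {}" by auto
    ultimately show ?thesis by blast
  qed
  obtain w0 where w0: "w0 \<in> e0" "(u, w0) \<in> R\<^sup>*"
    using S_reachable[OF e0(1)] by blast
  have reach: "\<forall>e\<in>E. v \<in> e \<longrightarrow> P e" if "(w0, v) \<in> R\<^sup>*" for v
    using that
  proof (induction rule: rtrancl_induct)
    case base
    have "e0 \<in> E" using S_reachable[OF e0(1)] by blast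
    then show ?case using step[of e0] e0(2) w0(1) by blast
  next
    case (step y z)
    then have "{y, z} \<in> E" "P {y, z}"
      unfolding R_def by auto
    then show ?case using assms(5)[of "{y, z}"] by blast
  qed
  have "(w0, u) \<in> R\<^sup>*"
    using w0(2) R_sym by (metis rtrancl_converseI)
  show ?thesis
  proof
    fix e assume "e \<in> S"
    then obtain v where "v \<in> e" "e \<in> E" "(u, v) \<in> R\<^sup>*"
      using S_reachable by blast
    then show "P e"
      using reach \<open>(w0, u) \<in> R\<^sup>*\<close> by (meson rtrancl_trans)
  qed
qed

lemma Stab_subset: "Stab n k Q \<Omega> f \<subseteq> Q"
  unfolding Stab_def by blast

lemma mem_Stab_if_pointwise:
  assumes "\<pi> \<in> Q" and "\<forall>x\<in>\<Omega>. \<exists>\<rho>\<in>Stab n k Q \<Omega> f. act n k \<pi> x = act n k \<rho> x"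
  shows "\<pi> \<in> Stab n k Q \<Omega> f"
  using assms unfolding Stab_def by fastforce

locale perm_subgroup =
  fixes n :: nat and Gs :: "(nat \<Rightarrow> nat) set"
  assumes subgroup_Gs: "subgroup Gs (sym_group n)"
begin

abbreviation "Gp \<equiv> perm_sub n Gs"

lemma Gp_simps [simp]: "carrier Gp = Gs" "mult Gp = (\<circ>)" "one Gp = id"
  by (simp_all add: perm_sub_def sym_group_def)

lemma group_Gp: "group Gp"
  unfolding perm_sub_def by (rule subgroup.subgroup_is_group[OF subgroup_Gs sym_group_is_group])

lemma permutes_Gs: "g \<in> Gs \<Longrightarrow> g permutes {1..n}"
  using subgroup.subset[OF subgroup_Gs] by (auto simp: sym_group_def)

lemma id_in_Gs [simp]: "id \<in> Gs"
  using subgroup.one_closed[OF subgroup_Gs] by (simp add: sym_group_def)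

lemma comp_in_Gs [simp]: "g \<in> Gs \<Longrightarrow> h \<in> Gs \<Longrightarrow> g \<circ> h \<in> Gs"
  using subgroup.m_closed[OF subgroup_Gs] by (simp add: sym_group_def)

lemma inv_Gp: "g \<in> Gs \<Longrightarrow> inv\<^bsub>Gp\<^esub> g = inv' g"
  using group.m_inv_consistent[OF sym_group_is_group subgroup_Gs] subgroup.subset[OF subgroup_Gs]
  by (auto simp: perm_sub_def)

lemma inv_in_Gs [simp]: "g \<in> Gs \<Longrightarrow> inv' g \<in> Gs"
  using group.inv_closed[OF group_Gp] inv_Gp by fastforce

lemma inv_comp_cancel [simp]:
  assumes "g \<in> Gs"
  shows "inv' g \<circ> g = id" "g \<circ> inv' g = id" "inv' g \<circ> (g \<circ> f) = f" "g \<circ> (inv' g \<circ> f) = f"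
  using permutes_inv_o[OF permutes_Gs[OF assms]] by (simp_all add: comp_assoc[symmetric])

lemma inv_inv_Gs [simp]: "g \<in> Gs \<Longrightarrow> inv' (inv' g) = g"
  using inv_inv_eq[OF permutes_bij[OF permutes_Gs]] .

lemma group_prod_grp: "group (prod_grp Gs k)"
proof (rule groupI)
  fix x assume x: "x \<in> carrier (prod_grp Gs k)"
  define y where "y = (\<lambda>j. if j \<in> {1..2*k} then inv' (x j) else id)"
  have "y \<in> carrier (prod_grp Gs k)" "y \<otimes>\<^bsub>prod_grp Gs k\<^esub> x = \<one>\<^bsub>prod_grp Gs k\<^esub>"
    using x unfolding y_def carrier_prod_grp mult_prod_grp one_prod_grp by auto
  then show "\<exists>y\<in>carrier (prod_grp Gs k). y \<otimes>\<^bsub>prod_grp Gs k\<^esub> x = \<one>\<^bsub>prod_grp Gs k\<^esub>"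
    by blast
qed (auto simp: carrier_prod_grp mult_prod_grp one_prod_grp o_assoc)

lemma edge_elem_carrier:
  "a \<in> Gs \<Longrightarrow> b \<in> Gs \<Longrightarrow> 1 \<le> i \<Longrightarrow> i + 1 \<le> k \<Longrightarrow> edge_elem i a b \<in> carrier (prod_grp Gs k)"
  unfolding carrier_prod_grp edge_elem_def by auto

lemma edge_elem_in_Qgrp:
  "a \<in> Gs \<Longrightarrow> b \<in> Gs \<Longrightarrow> 1 \<le> i \<Longrightarrow> i + 1 \<le> k \<Longrightarrow> edge_elem i a b \<in> Qgrp Gs k"
  using edge_elem_carrier unfolding Qgrp_def edge_elem_def by auto

lemma edge_elem_inv:
  assumes "a \<in> Gs" "b \<in> Gs" "1 \<le> i" "i + 1 \<le> k"
  shows "inv\<^bsub>prod_grp Gs k\<^esub> edge_elem i a b = edge_elem i (inv' a) (inv' b)"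
  using assms by (intro group.inv_equality[OF group_prod_grp])
    (simp_all add: edge_elem_mult edge_elem_carrier edge_elem_id)

lemma left_part_normal:
  assumes L: "subgroup L (prod_grp Gs k)" and i: "1 \<le> i" "i + 1 \<le> k"
    and diag: "Id_on Gs \<subseteq> edge_part Gs L i"
  shows "{g \<in> Gs. edge_elem i g id \<in> L} \<lhd> Gp"
proof (rule group.normal_invI[OF group_Gp])
  show "subgroup {g \<in> Gs. edge_elem i g id \<in> L} Gp"
  proof (rule group.subgroupI[OF group_Gp])
    show "{g \<in> Gs. edge_elem i g id \<in> L} \<noteq> {}"
      using id_in_Gs Id_on_edge_part_elem[OF diag id_in_Gs] by blast
  next
    fix g assume g: "g \<in> {g \<in> Gs. edge_elem i g id \<in> L}"
    then have "inv\<^bsub>prod_grp Gs k\<^esub> edge_elem i g id \<in> L"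
      using subgroup.m_inv_closed[OF L] by blast
    then show "inv\<^bsub>Gp\<^esub> g \<in> {g \<in> Gs. edge_elem i g id \<in> L}"
      using g i by (simp add: edge_elem_inv inv_Gp inv_id)
  next
    fix g h assume "g \<in> {g \<in> Gs. edge_elem i g id \<in> L}" "h \<in> {g \<in> Gs. edge_elem i g id \<in> L}"
    then show "g \<otimes>\<^bsub>Gp\<^esub> h \<in> {g \<in> Gs. edge_elem i g id \<in> L}"
      using subgroup.m_closed[OF L, of "edge_elem i g id" "edge_elem i h id"]
      by (simp add: edge_elem_mult)
  qed auto
next
  fix x h assume x: "x \<in> carrier Gp" and h: "h \<in> {g \<in> Gs. edge_elem i g id \<in> L}"
  have "edge_elem i x x \<otimes>\<^bsub>prod_grp Gs k\<^esub> edge_elem i h id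
      \<otimes>\<^bsub>prod_grp Gs k\<^esub> edge_elem i (inv' x) (inv' x) \<in> L"
    using x h Id_on_edge_part_elem[OF diag] by (intro subgroup.m_closed[OF L]) auto
  then show "x \<otimes>\<^bsub>Gp\<^esub> h \<otimes>\<^bsub>Gp\<^esub> inv\<^bsub>Gp\<^esub> x \<in> {g \<in> Gs. edge_elem i g id \<in> L}"
    using x h by (simp add: edge_elem_mult inv_Gp)
qed

lemma edge_part_Id_on_or_full:
  assumes simple: "simple_group Gp" and L: "subgroup L (prod_grp Gs k)"
    and i: "1 \<le> i" "i + 1 \<le> k" and diag: "Id_on Gs \<subseteq> edge_part Gs L i"
  shows "edge_part Gs L i = Id_on Gs \<or> edge_part Gs L i = Gs \<times> Gs"
proof (cases "edge_part Gs L i = Id_on Gs")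
  case False
  define N where "N = {g \<in> Gs. edge_elem i g id \<in> L}"
  note mult_L = subgroup.m_closed[OF L]
  from False obtain a b where ab: "a \<in> Gs" "b \<in> Gs" "a \<noteq> b" "edge_elem i a b \<in> L"
    using diag unfolding edge_part_def Id_on_def by blast
  have "edge_elem i a b \<otimes>\<^bsub>prod_grp Gs k\<^esub> edge_elem i (inv' b) (inv' b) \<in> L"
    using ab Id_on_edge_part_elem[OF diag] by (intro mult_L) auto
  then have "a \<circ> inv' b \<in> N"
    using ab unfolding N_def by (simp add: edge_elem_mult)
  moreover have "a \<circ> inv' b \<noteq> id"
    using ab by (metis comp_id inv_comp_cancel(1,3) o_assoc)
  ultimately have "N = Gs"
    using simple_group.no_real_normal_subgroup[OF simple left_part_normal[OF L i diag]]
    unfolding N_def by auto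
  have "Gs \<times> Gs \<subseteq> edge_part Gs L i"
  proof
    fix p assume "p \<in> Gs \<times> Gs"
    then obtain c d where cd: "p = (c, d)" "c \<in> Gs" "d \<in> Gs" by blast
    have "edge_elem i (c \<circ> inv' d) id \<otimes>\<^bsub>prod_grp Gs k\<^esub> edge_elem i d d \<in> L"
      using \<open>N = Gs\<close> cd Id_on_edge_part_elem[OF diag] unfolding N_def by (intro mult_L) auto
    then show "p \<in> edge_part Gs L i"
      using cd by (simp add: edge_elem_mult edge_part_def comp_assoc)
  qed
  then show ?thesis
    by (auto simp: edge_part_def)
qed simp

lemma perm_in_range: "g \<in> Gs \<Longrightarrow> a \<in> {1..n} \<Longrightarrow> g a \<in> {1..n}"
  using permutes_in_image[OF permutes_Gs] by blast

lemma act_perm_point: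
  assumes \<pi>: "\<pi> \<in> carrier (prod_grp Gs k)" and h: "\<forall>i\<in>{1..k}. h i \<in> Gs"
  shows "act n k \<pi> (perm_point n k h) = perm_point n k (tuple_act \<pi> h)"
proof (intro ext)
  fix i a b
  show "act n k \<pi> (perm_point n k h) i a b = perm_point n k (tuple_act \<pi> h) i a b"
  proof (cases "i \<in> {1..k} \<and> a \<in> {1..n} \<and> b \<in> {1..n}")
    case True
    then have \<pi>_i: "\<pi> (2*i - 1) \<in> Gs" "\<pi> (2*i) \<in> Gs"
      using \<pi> unfolding carrier_prod_grp by auto
    then have "\<pi> (2*i - 1) a = h i (\<pi> (2*i) b) \<longleftrightarrow> a = inv' (\<pi> (2*i - 1)) (h i (\<pi> (2*i) b))"
      using permutes_inverses[OF permutes_Gs] by metis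
    then show ?thesis
      using True \<pi>_i perm_in_range unfolding act_def perm_point_def tuple_act_def perm_mat_def by simp
  qed (auto simp: act_def perm_point_def)
qed

lemma tuple_act_mult:
  assumes "\<sigma> \<in> carrier (prod_grp Gs k)" "\<tau> \<in> carrier (prod_grp Gs k)" "j \<in> {1..k}"
  shows "tuple_act (\<sigma> \<otimes>\<^bsub>prod_grp Gs k\<^esub> \<tau>) h j = tuple_act \<tau> (tuple_act \<sigma> h) j"
proof -
  have "\<sigma> (2*j - 1) \<in> Gs" "\<tau> (2*j - 1) \<in> Gs"
    using assms unfolding carrier_prod_grp by auto
  then have "inv' (\<sigma> (2*j - 1) \<circ> \<tau> (2*j - 1)) = inv' (\<tau> (2*j - 1)) \<circ> inv' (\<sigma> (2*j - 1))"
    using o_inv_distrib permutes_bij permutes_Gs by blast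
  then show ?thesis
    unfolding tuple_act_def mult_prod_grp by (simp add: comp_assoc)
qed

(* A stabiliser only sees points of Omega, so pi may be matched by a different element of L on
   each point. *)
lemma mem_Stab_if_tuplewise:
  assumes L: "L = Stab n k (Qgrp Gs k) (Omega n Gs k) f" and \<pi>: "\<pi> \<in> Qgrp Gs k"
    and absorb: "\<And>h. \<forall>j\<in>{1..k}. h j \<in> Gs \<Longrightarrow>
      \<exists>\<rho>\<in>L. \<forall>j\<in>{1..k}. tuple_act \<pi> h j = tuple_act \<rho> h j"
  shows "\<pi> \<in> L"
proof -
  have Q_carrier: "Qgrp Gs k \<subseteq> carrier (prod_grp Gs k)"
    unfolding Qgrp_def by blast
  have "\<exists>\<rho>\<in>L. act n k \<pi> x = act n k \<rho> x" if "x \<in> Omega n Gs k" for x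
  proof -
    obtain h where h: "\<forall>j\<in>{1..k}. h j \<in> Gs" and x: "x = perm_point n k h"
      using \<open>x \<in> Omega n Gs k\<close> unfolding Omega_iff by blast
    obtain \<rho> where \<rho>: "\<rho> \<in> L" "\<forall>j\<in>{1..k}. tuple_act \<pi> h j = tuple_act \<rho> h j"
      using absorb[OF h] by blast
    have "\<rho> \<in> carrier (prod_grp Gs k)" "\<pi> \<in> carrier (prod_grp Gs k)"
      using \<rho>(1) \<pi> L Stab_subset Q_carrier by blast+
    moreover have "perm_point n k (tuple_act \<pi> h) = perm_point n k (tuple_act \<rho> h)"
      using \<rho>(2) by (intro perm_point_cong) simp
    ultimately have "act n k \<pi> x = act n k \<rho> x"
      unfolding x by (simp add: act_perm_point h)
    with \<rho>(1) show ?thesis by blast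
  qed
  with \<pi> show ?thesis
    using mem_Stab_if_pointwise[of \<pi> "Qgrp Gs k" "Omega n Gs k" n k f] L by blast
qed

lemma Stab_left_factor_mem:
  assumes L: "subgroup L (prod_grp Gs k)" "L = Stab n k (Qgrp Gs k) (Omega n Gs k) f"
    and i: "1 \<le> i" "i + 2 \<le> k"
    and diag: "Id_on Gs \<subseteq> edge_part Gs L i" and full: "edge_part Gs L (i+1) = Gs \<times> Gs"
    and g: "g \<in> Gs"
  shows "edge_elem i g id \<in> L"
proof (rule mem_Stab_if_tuplewise[OF L(2)])
  show "edge_elem i g id \<in> Qgrp Gs k"
    using edge_elem_in_Qgrp g i by simp
next
  fix h assume h: "\<forall>j\<in>{1..k}. h j \<in> Gs"
  define c where "c = h (i+1)"
  have c: "c \<in> Gs" using h i unfolding c_def by auto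
  define \<sigma> where "\<sigma> = edge_elem i g g"
  \<comment> \<open>the factor g that \<open>\<sigma>\<close> puts on the left of the (i+1)-st matrix is undone on its right\<close>
  define \<tau> where "\<tau> = edge_elem (i+1) (inv' c \<circ> g \<circ> c) id"
  have "\<sigma> \<in> L"
    unfolding \<sigma>_def by (rule Id_on_edge_part_elem[OF diag g])
  moreover have "(inv' c \<circ> g \<circ> c, id) \<in> edge_part Gs L (i+1)"
    using full c g by simp
  then have "\<tau> \<in> L"
    unfolding \<tau>_def edge_part_def by simp
  ultimately have \<rho>: "\<sigma> \<otimes>\<^bsub>prod_grp Gs k\<^esub> \<tau> \<in> L"
    and \<sigma>\<tau>: "\<sigma> \<in> carrier (prod_grp Gs k)" "\<tau> \<in> carrier (prod_grp Gs k)"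
    using subgroup.m_closed[OF L(1)] subgroup.mem_carrier[OF L(1)] by blast+
  have "tuple_act (edge_elem i g id) h j = tuple_act (\<sigma> \<otimes>\<^bsub>prod_grp Gs k\<^esub> \<tau>) h j"
    if j: "j \<in> {1..k}" for j
  proof -
    have "1 \<le> j" using j by simp
    have "tuple_act (\<sigma> \<otimes>\<^bsub>prod_grp Gs k\<^esub> \<tau>) h j = tuple_act \<tau> (tuple_act \<sigma> h) j"
      by (rule tuple_act_mult[OF \<sigma>\<tau> j])
    also have "\<dots> = tuple_act (edge_elem i g id) h j"
      using c g unfolding \<sigma>_def \<tau>_def tuple_act_edge_elem[OF \<open>1 \<le> j\<close>] c_def
      by (auto simp: comp_assoc)
    finally show ?thesis by (rule sym)
  qed
  with \<rho> show "\<exists>\<rho>\<in>L. \<forall>j\<in>{1..k}. tuple_act (edge_elem i g id) h j = tuple_act \<rho> h j"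
    by blast
qed

lemma Stab_right_factor_mem:
  assumes L: "subgroup L (prod_grp Gs k)" "L = Stab n k (Qgrp Gs k) (Omega n Gs k) f"
    and i: "1 \<le> i" "i + 2 \<le> k"
    and diag: "Id_on Gs \<subseteq> edge_part Gs L (i+1)" and full: "edge_part Gs L i = Gs \<times> Gs"
    and g: "g \<in> Gs"
  shows "edge_elem (i+1) id g \<in> L"
proof (rule mem_Stab_if_tuplewise[OF L(2)])
  show "edge_elem (i+1) id g \<in> Qgrp Gs k"
    using edge_elem_in_Qgrp g i by simp
next
  fix h assume h: "\<forall>j\<in>{1..k}. h j \<in> Gs"
  define c where "c = h (i+1)"
  have c: "c \<in> Gs" using h i unfolding c_def by auto
  define d where "d = c \<circ> inv' g \<circ> inv' c"
  have d: "d \<in> Gs" using c g unfolding d_def by simp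
  define \<sigma> where "\<sigma> = edge_elem i id (inv' d)"
  define \<tau> where "\<tau> = edge_elem (i+1) g g"
  have "(id, inv' d) \<in> edge_part Gs L i"
    using full d by simp
  then have "\<sigma> \<in> L"
    unfolding \<sigma>_def edge_part_def by simp
  moreover have "\<tau> \<in> L"
    unfolding \<tau>_def by (rule Id_on_edge_part_elem[OF diag g])
  ultimately have \<rho>: "\<sigma> \<otimes>\<^bsub>prod_grp Gs k\<^esub> \<tau> \<in> L"
    and \<sigma>\<tau>: "\<sigma> \<in> carrier (prod_grp Gs k)" "\<tau> \<in> carrier (prod_grp Gs k)"
    using subgroup.m_closed[OF L(1)] subgroup.mem_carrier[OF L(1)] by blast+
  have "tuple_act (edge_elem (i+1) id g) h j = tuple_act (\<sigma> \<otimes>\<^bsub>prod_grp Gs k\<^esub> \<tau>) h j"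
    if j: "j \<in> {1..k}" for j
  proof -
    have "1 \<le> j" using j by simp
    have "tuple_act (\<sigma> \<otimes>\<^bsub>prod_grp Gs k\<^esub> \<tau>) h j = tuple_act \<tau> (tuple_act \<sigma> h) j"
      by (rule tuple_act_mult[OF \<sigma>\<tau> j])
    also have "\<dots> = tuple_act (edge_elem (i+1) id g) h j"
      using c g d unfolding \<sigma>_def \<tau>_def tuple_act_edge_elem[OF \<open>1 \<le> j\<close>]
      by (auto simp: comp_assoc d_def c_def)
    finally show ?thesis by (rule sym)
  qed
  with \<rho> show "\<exists>\<rho>\<in>L. \<forall>j\<in>{1..k}. tuple_act (edge_elem (i+1) id g) h j = tuple_act \<rho> h j"
    by blast
qed

lemma simple_nontrivial: "simple_group Gp \<Longrightarrow> \<exists>g\<in>Gs. g \<noteq> id"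
  using simple_group.simple_not_triv id_in_Gs by fastforce

lemma Stab_edge_part_propagates:
  assumes simple: "simple_group Gp"
    and L: "subgroup L (prod_grp Gs k)" "L \<in> NQ n k (Qgrp Gs k) (Omega n Gs k)"
    and i: "1 \<le> i" "i + 1 \<le> k" and j: "1 \<le> j" "j + 1 \<le> k" and adj: "{i, i+1} \<inter> {j, j+1} \<noteq> {}"
    and Id_i: "edge_part Gs L i = Id_on Gs" and diag_j: "Id_on Gs \<subseteq> edge_part Gs L j"
  shows "edge_part Gs L j = Id_on Gs"
proof (rule ccontr)
  assume not_Id: "edge_part Gs L j \<noteq> Id_on Gs"
  then have full: "edge_part Gs L j = Gs \<times> Gs"
    using edge_part_Id_on_or_full[OF simple L(1) j diag_j] by blast
  obtain f where f: "L = Stab n k (Qgrp Gs k) (Omega n Gs k) f"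
    using L(2) unfolding NQ_def by blast
  obtain g where g: "g \<in> Gs" "g \<noteq> id"
    using simple_nontrivial[OF simple] by blast
  consider "j = i" | "j = i + 1" | "i = j + 1"
    using adj by auto
  then show False
  proof cases
    case 1
    then show False using Id_i not_Id by simp
  next
    case 2
    then have "edge_elem i g id \<in> L"
      using Stab_left_factor_mem[OF L(1) f i(1) _ _ _ g(1)] Id_i full j by simp
    then have "(g, id) \<in> Id_on Gs"
      using g(1) unfolding Id_i[symmetric] edge_part_def by simp
    with g(2) show False by (simp add: Id_on_iff)
  next
    case 3
    then have "edge_elem i id g \<in> L"
      using Stab_right_factor_mem[OF L(1) f j(1) _ _ full g(1)] Id_i i by simp
    then have "(id, g) \<in> Id_on Gs"
      using g(1) unfolding Id_i[symmetric] edge_part_def by simp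
    with g(2) show False by (simp add: Id_on_iff)
  qed
qed

lemma Stab_Eset_propagates:
  assumes simple: "simple_group Gp"
    and L: "subgroup L (prod_grp Gs k)" "L \<in> NQ n k (Qgrp Gs k) (Omega n Gs k)" and H: "H \<subseteq> L"
    and e: "e \<in> Eset Gs k L" and e': "e' \<in> Eset Gs k H" and adj: "e \<inter> e' \<noteq> {}"
  shows "e' \<in> Eset Gs k L"
proof -
  have L_carrier: "L \<subseteq> carrier (prod_grp Gs k)"
    using subgroup.subset[OF L(1)] .
  obtain i where i: "1 \<le> i" "i + 1 \<le> k" "e = {i, i+1}"
    using Eset_edge[OF e] by blast
  obtain j where j: "1 \<le> j" "j + 1 \<le> k" "e' = {j, j+1}"
    using Eset_edge[OF e'] by blast
  have "edge_part Gs L i = Id_on Gs"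
    using e i edge_in_Eset_iff[OF L_carrier i(1,2)] by simp
  moreover have "Id_on Gs \<subseteq> edge_part Gs L j"
    using Eset_Id_on_subset[OF H L_carrier _ j(1,2)] e' j(3) by simp
  ultimately have "edge_part Gs L j = Id_on Gs"
    using Stab_edge_part_propagates[OF simple L i(1,2) j(1,2)] adj i(3) j(3) by simp
  then show ?thesis
    using edge_in_Eset_iff[OF L_carrier j(1,2)] j(3) by simp
qed

lemma Stab_Eset_component:
  assumes simple: "simple_group Gp"
    and L: "subgroup L (prod_grp Gs k)" "L \<in> NQ n k (Qgrp Gs k) (Omega n Gs k)" and H: "H \<subseteq> L"
    and S: "component_edges k (Eset Gs k H \<inter> E) S" and e0: "e0 \<in> S" "e0 \<in> Eset Gs k L"
  shows "S \<subseteq> Eset Gs k L"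
proof -
  have "\<forall>e\<in>S. e \<in> Eset Gs k L"
  proof (rule component_edges_propagate[where P = "\<lambda>e. e \<in> Eset Gs k L", OF S _ e0])
    show "{} \<notin> Eset Gs k H \<inter> E"
      using Eset_edge by blast
  next
    fix e e' assume "e \<in> Eset Gs k H \<inter> E" "e' \<in> Eset Gs k H \<inter> E" "e \<inter> e' \<noteq> {}" "e \<in> Eset Gs k L"
    then show "e' \<in> Eset Gs k L"
      using Stab_Eset_propagates[OF simple L H] by blast
  qed
  then show ?thesis by blast
qed

lemma exists_factor_keeping_edge:
  assumes simple: "simple_group Gp"
    and Ls: "\<And>l. l \<in> I \<Longrightarrow> subgroup (Ls l) (prod_grp Gs k) \<and> H \<subseteq> Ls l"
    and K: "K \<subseteq> carrier (prod_grp Gs k)" "(\<Inter>l\<in>I. Ls l) \<subseteq> K"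
    and e: "e \<in> Eset Gs k H" "e \<in> Eset Gs k K"
  shows "\<exists>l\<in>I. e \<in> Eset Gs k (Ls l)"
proof (rule ccontr)
  assume none: "\<not> (\<exists>l\<in>I. e \<in> Eset Gs k (Ls l))"
  obtain i where i: "1 \<le> i" "i + 1 \<le> k" "e = {i, i+1}"
    using Eset_edge[OF e(1)] by blast
  obtain g where g: "g \<in> Gs" "g \<noteq> id"
    using simple_nontrivial[OF simple] by blast
  have "edge_elem i g id \<in> Ls l" if l: "l \<in> I" for l
  proof -
    have L: "subgroup (Ls l) (prod_grp Gs k)" "H \<subseteq> Ls l"
      using Ls[OF l] by auto
    note L_carrier = subgroup.subset[OF L(1)]
    have "Id_on Gs \<subseteq> edge_part Gs (Ls l) i"
      using Eset_Id_on_subset[OF L(2) L_carrier _ i(1,2)] e(1) i(3) by simp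
    moreover have "edge_part Gs (Ls l) i \<noteq> Id_on Gs"
      using none l edge_in_Eset_iff[OF L_carrier i(1,2)] i(3) by auto
    ultimately have "edge_part Gs (Ls l) i = Gs \<times> Gs"
      using edge_part_Id_on_or_full[OF simple L(1) i(1,2)] by blast
    then show ?thesis
      using g(1) unfolding edge_part_def by auto
  qed
  then have "(g, id) \<in> edge_part Gs K i"
    using K(2) g(1) unfolding edge_part_def by auto
  moreover have "edge_part Gs K i = Id_on Gs"
    using e(2) i edge_in_Eset_iff[OF K(1) i(1,2)] by simp
  ultimately show False
    using g(2) by auto
qed

end

theorem lemma6p10:
  fixes n k r :: nat and Gs :: "(nat \<Rightarrow> nat) set"
    and H K :: "(nat \<Rightarrow> nat \<Rightarrow> nat) set" and S :: "nat set set"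
    and Hs Ls :: "nat \<Rightarrow> (nat \<Rightarrow> nat \<Rightarrow> nat) set"
  assumes "subgroup Gs (sym_group n)"
    and "finite Gs"
    and "simple_group (perm_sub n Gs)"
    and "\<not> comm_group (perm_sub n Gs)"
    and "min_degree_rep n Gs"
    and "k \<ge> 1"
    and "subgroup H (prod_grp Gs k)" and "subgroup K (prod_grp Gs k)"
    and "H \<subseteq> K" and "K \<subseteq> Qgrp Gs k"
    and "component_edges k (Eset Gs k H \<inter> Eset Gs k K) S"
    and "r \<ge> 1"
    and "\<forall>i\<in>{1..r}. subgroup (Hs i) (prod_grp Gs k) \<and> subgroup (Ls i) (prod_grp Gs k)
                   \<and> Hs i \<subseteq> Ls i \<and> Ls i \<subseteq> Qgrp Gs k
                   \<and> Ls i \<in> NQ n k (Qgrp Gs k) (Omega n Gs k)"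
    and "(\<Inter>i\<in>{1..r}. Hs i) = H"
    and "(\<Inter>i\<in>{1..r}. Ls i) \<subseteq> K"
  shows "\<exists>i\<in>{1..r}. S \<subseteq> Eset Gs k (Hs i) \<inter> Eset Gs k (Ls i)"
proof (cases "S = {}")
  case True
  then show ?thesis using \<open>r \<ge> 1\<close> by auto
next
  case False
  interpret perm_subgroup n Gs by (rule perm_subgroup.intro) fact
  have factors: "subgroup (Ls l) (prod_grp Gs k) \<and> H \<subseteq> Hs l \<and> Hs l \<subseteq> Ls l"
    if "l \<in> {1..r}" for l
    using that assms(13,14) by blast
  have S_E: "S \<subseteq> Eset Gs k H \<inter> Eset Gs k K"
    using assms(11) unfolding component_edges_def by auto
  from False obtain e0 where e0: "e0 \<in> S" by blast
  have "\<exists>l\<in>{1..r}. e0 \<in> Eset Gs k (Ls l)"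
    using factors subgroup.subset[OF assms(8)] assms(15) S_E e0
    by (intro exists_factor_keeping_edge[OF assms(3), where H = H and K = K]) auto
  then obtain l where l: "l \<in> {1..r}" "e0 \<in> Eset Gs k (Ls l)"
    by blast
  have l_factor: "subgroup (Ls l) (prod_grp Gs k)" "H \<subseteq> Hs l" "Hs l \<subseteq> Ls l"
    using factors[OF l(1)] by auto
  have "S \<subseteq> Eset Gs k (Ls l)"
    using Stab_Eset_component[OF assms(3) l_factor(1) _ _ assms(11) e0 l(2)] l_factor assms(13) l(1)
    by blast
  then have "S \<subseteq> Eset Gs k (Hs l) \<inter> Eset Gs k (Ls l)"
    using Eset_sandwich[OF l_factor(2,3) subgroup.subset[OF l_factor(1)]] S_E by blast
  with l(1) show ?thesis by blast
qed

end
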